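(* Let Alice hold a string $A$ and Bob hold a string $B$, and let $\ell=\mathrm{LCP}(A,B)$. Using a randomized public-coin protocol, they can find a number $\ell'\ge\ell$ such that either (1) $\ell'\le\ell^2$, using $O(\lg\lg\ell)$ rounds and $O(\lg\lg\ell)$ total communication, or (2) $\ell'\le|A|^2$, using $O(1)$ rounds and $O(\lg\lg\lg|A|)$ total communication.
   Context: $\mathrm{LCP}(A,B)$ is the length of the longest common prefix of $A$ and $B$. In the public-coin model the parties share an infinite string of independent unbiased random bits, and the result must be correct with probability at least a fixed constant greater than $1/2$. *)

theory Defs
  imports "HOL-Probability.Probability" "HOL-Library.Sublist"
begin

definition LCP :: "'a list \<Rightarrow> 'a list \<Rightarrow> nat" where
  "LCP A B = length (longest_common_prefix A B)"

definition coins :: "(nat \<Rightarrow> bool) measure" where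
  "coins = PiM UNIV (\<lambda>_::nat. measure_pmf (bernoulli_pmf (1/2)))"

text \<open>Message number i
  (counting from 0) is sent by Alice if i is even and by Bob if i is odd; the sender's
  message depends on his own input, the public coins and the transcript so far.
  Whether the protocol has halted, and its output, are functions of the public
  coins and the transcript (hence known to both parties).\<close>
record 'a protocol =
  msgA :: "'a list \<Rightarrow> (nat \<Rightarrow> bool) \<Rightarrow> bool list list \<Rightarrow> bool list"
  msgB :: "'a list \<Rightarrow> (nat \<Rightarrow> bool) \<Rightarrow> bool list list \<Rightarrow> bool list"
  halts :: "(nat \<Rightarrow> bool) \<Rightarrow> bool list list \<Rightarrow> bool"
  outp :: "(nat \<Rightarrow> bool) \<Rightarrow> bool list list \<Rightarrow> nat"

text \<open>Messages must be self-delimiting: in every situation the set of possible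
  messages is prefix-free.\<close>
definition prefix_free_protocol :: "'a protocol \<Rightarrow> bool" where
  "prefix_free_protocol P \<longleftrightarrow>
     (\<forall>r t X Y. \<not> strict_prefix (msgA P X r t) (msgA P Y r t)) \<and>
     (\<forall>r t X Y. \<not> strict_prefix (msgB P X r t) (msgB P Y r t))"

fun run :: "'a protocol \<Rightarrow> 'a list \<Rightarrow> 'a list \<Rightarrow> (nat \<Rightarrow> bool) \<Rightarrow> nat \<Rightarrow> bool list list" where
  "run P A B r 0 = []"
| "run P A B r (Suc n) =
     (let t = run P A B r n in
      if halts P r t then t
      else t @ [if even (length t) then msgA P A r t else msgB P B r t])"

definition good_run :: "'a protocol \<Rightarrow> 'a list \<Rightarrow> 'a list \<Rightarrow> real \<Rightarrow> real
    \<Rightarrow> (nat \<Rightarrow> bool) \<Rightarrow> (nat \<Rightarrow> bool) \<Rightarrow> bool" where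
  "good_run P A B R M ok r \<longleftrightarrow>
     (\<exists>k. real k \<le> R \<and> halts P r (run P A B r k) \<and>
          real (sum_list (map length (run P A B r k))) \<le> M \<and>
          ok (outp P r (run P A B r k)))"

end

theory Submission
  imports Defs "HOL-Library.Log_Nat"
begin

(* Both protocols use the scale level 0 = 1, level (i + 1) = 2^2^i, in which each level is at most
   the square of the previous one: for the least index c = level_index n with n < level c we get
   n <= level c - 1 <= n^2, and c = O(lg lg n).
   For (1), in round i Alice sends two public-coin hash bits of her prefix of length level i, and
   Bob stops when his prefix hashes differently. Before round c = level_index (LCP A B) the
   prefixes agree, so nobody stops; in round c they differ (or A is too short), and two different
   prefixes hash alike with probability only 1/4. So with probability 3/4 the protocol stops after
   c rounds of four bits each and outputs level c - 1.
   For (2), Alice announces c = level_index |A| in a self-delimiting code of O(lg c), that is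
   O(lg lg lg |A|), bits. *)

section \<open>Longest common prefixes\<close>

lemma le_LCP_iff:
  "L \<le> LCP A B \<longleftrightarrow> L \<le> length A \<and> L \<le> length B \<and> take L A = take L B"
  unfolding LCP_def
proof (induction A B arbitrary: L rule: longest_common_prefix.induct)
  case (1 x xs y ys)
  then show ?case by (cases L) auto
qed auto

lemma LCP_le_length: "LCP A B \<le> length A"
  using le_LCP_iff[of "LCP A B" A B] by simp

lemma LCP_less_iff:
  "LCP A B < L \<longleftrightarrow> length A < L \<or> take L A \<noteq> take L B"
proof -
  have "L \<le> length B" if "L \<le> length A" "take L A = take L B"
  proof -
    have "length (take L B) = L"
      using that by (metis length_take min.absorb2)
    then show ?thesis by (simp add: min_def split: if_splits)
  qed
  then show ?thesis
    using le_LCP_iff[of L A B] by (auto simp: not_le[symmetric])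
qed

section \<open>A doubly exponential scale\<close>

fun level :: "nat \<Rightarrow> nat" where
  "level 0 = 1"
| "level (Suc i) = 2 ^ 2 ^ i"

lemma less_level: "i < level i"
proof (cases i)
  case (Suc j)
  have "Suc j \<le> 2 ^ j" by (rule Suc_leI) (rule less_exp)
  also have "\<dots> < 2 ^ 2 ^ j" by (rule power_strict_increasing) (simp_all add: less_exp)
  finally show ?thesis using Suc by simp
qed simp

lemma level_Suc_minus_one_le: "level (Suc i) - 1 \<le> level i ^ 2"
  by (cases i) (simp_all add: mult.commute flip: power_mult)

definition level_index :: "nat \<Rightarrow> nat" where
  "level_index n = (LEAST i. n < level i)"

lemma less_level_index: "n < level (level_index n)"
  unfolding level_index_def by (rule LeastI[of _ n]) (rule less_level)

lemma level_le_below_level_index: "j < level_index n \<Longrightarrow> level j \<le> n"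
  using not_less_Least[of j "\<lambda>i. n < level i"] unfolding level_index_def by simp

lemma level_index_bounds: "n \<le> level (level_index n) - 1 \<and> level (level_index n) - 1 \<le> n ^ 2"
proof -
  have "level (level_index n) - 1 \<le> n ^ 2"
  proof (cases "level_index n")
    case (Suc i)
    then have "level i \<le> n"
      using level_le_below_level_index by simp
    then have "level i ^ 2 \<le> n ^ 2"
      by (rule power_mono) simp
    with level_Suc_minus_one_le[of i] show ?thesis
      using Suc by (metis le_trans)
  qed simp
  then show ?thesis
    using less_level_index[of n] by simp
qed

lemma one_le_loglog: "1 \<le> log 2 (log 2 (real n + 4))"
proof -
  have "2 \<le> log 2 (real n + 4)"
    by (subst le_log_iff) auto
  then show ?thesis by (subst le_log_iff) auto
qed

lemma less_loglog:
  assumes "2 ^ 2 ^ m \<le> n"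
  shows "real m < log 2 (log 2 (real n + 4))"
proof -
  have "(2::real) powr real (2 ^ m) = 2 ^ 2 ^ m"
    by (rule powr_realpow) simp
  moreover have "(2::real) ^ 2 ^ m \<le> real n"
    using assms by (metis of_nat_le_iff of_nat_numeral of_nat_power)
  ultimately have "2 powr real (2 ^ m) < real n + 4"
    by linarith
  then have "2 powr real m < log 2 (real n + 4)"
    by (simp add: less_log_iff powr_realpow)
  moreover have "0 < log 2 (real n + 4)"
    by simp
  ultimately show ?thesis by (simp add: less_log_iff)
qed

lemma level_index_less_loglog: "real (level_index n) < log 2 (log 2 (real n + 4)) + 2"
proof (cases "2 \<le> level_index n")
  case True
  then have "level_index n - 1 = Suc (level_index n - 2)"
    by simp
  then have "level (level_index n - 1) = 2 ^ 2 ^ (level_index n - 2)"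
    by (metis level.simps(2))
  then have "real (level_index n - 2) < log 2 (log 2 (real n + 4))"
    using less_loglog[of "level_index n - 2" n] level_le_below_level_index[of "level_index n - 1" n]
      True
    by simp
  then show ?thesis using True by linarith
next
  case False
  then show ?thesis using one_le_loglog[of n] by linarith
qed

section \<open>Public coins\<close>

interpretation coins: product_prob_space "\<lambda>_::nat. measure_pmf (bernoulli_pmf (1/2))" UNIV
  by unfold_locales

lemma space_coins [simp]: "space coins = UNIV"
  by (simp add: coins_def space_PiM)

lemma prob_space_coins: "prob_space coins"
  unfolding coins_def by (rule coins.P.prob_space_axioms)

lemma measurable_coin [measurable]: "(\<lambda>r. r j) \<in> coins \<rightarrow>\<^sub>M count_space UNIV"
proof -
  have "(\<lambda>r. r j) \<in> coins \<rightarrow>\<^sub>M measure_pmf (bernoulli_pmf (1/2))"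
    unfolding coins_def by (rule measurable_component_singleton) simp
  then show ?thesis by (simp add: measurable_cong_sets)
qed

lemma measure_coins_agree:
  assumes "finite J"
  shows "measure coins {r. \<forall>j\<in>J. r j = v j} = (1/2) ^ card J"
proof -
  have "measure coins {r. \<forall>j\<in>J. r j \<in> {v j}}
      = (\<Prod>j\<in>J. measure (measure_pmf (bernoulli_pmf (1/2))) {v j})"
    unfolding coins_def using coins.emeasure_PiM_Collect[of J "\<lambda>j. {v j}"] assms
    by (simp add: coins.P.emeasure_eq_measure measure_pmf.emeasure_eq_measure prod_ennreal
        prod_nonneg space_PiM)
  then show ?thesis by (simp add: measure_pmf_single)
qed

lemma measure_coins_double_collision:
  assumes "distinct [a, b, c, d]"
  shows "measure coins {r. r a = r b \<and> r c = r d} = 1/4"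
proof -
  interpret prob_space coins
    by (rule prob_space_coins)
  define J where "J = {a, b, c, d}"
  define pattern :: "bool \<times> bool \<Rightarrow> nat \<Rightarrow> bool"
    where "pattern = (\<lambda>(u, v) j. if j = a \<or> j = b then u else v)"
  define box where "box uv = {r. \<forall>j\<in>J. r j = pattern uv j}" for uv
  have box_iff: "r \<in> box (u, v) \<longleftrightarrow> r a = u \<and> r b = u \<and> r c = v \<and> r d = v" for r u v
    using assms by (auto simp: box_def J_def pattern_def)
  have box_sets: "box (u, v) \<in> sets coins" for u v
  proof -
    have "box (u, v) = {r \<in> space coins. r a = u \<and> r b = u \<and> r c = v \<and> r d = v}"
      by (auto simp: box_iff)
    also have "\<dots> \<in> sets coins"
      by measurable
    finally show ?thesis .
  qed
  have "{r. r a = r b \<and> r c = r d} = (\<Union>uv\<in>UNIV. box uv)"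
    by (auto simp: box_iff)
  also have "measure coins \<dots> = (\<Sum>uv\<in>UNIV. measure coins (box uv))"
    by (rule finite_measure_finite_Union) (auto simp: box_sets disjoint_family_on_def box_iff)
  also have "\<dots> = 1/4"
  proof -
    have box_measure: "measure coins (box uv) = 1/16" for uv
      using measure_coins_agree[of J "pattern uv"] assms by (simp add: box_def J_def)
    show ?thesis
      by (simp only: box_measure sum_constant) (simp flip: UNIV_Times_UNIV)
  qed
  finally show ?thesis .
qed

lemma measurable_Cons_countable [measurable]:
  fixes f :: "'b \<Rightarrow> 'c::countable"
  assumes "f \<in> M \<rightarrow>\<^sub>M count_space UNIV" "g \<in> M \<rightarrow>\<^sub>M count_space UNIV"
  shows "(\<lambda>x. f x # g x) \<in> M \<rightarrow>\<^sub>M count_space UNIV"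
proof -
  have "(\<lambda>x. a # g x) \<in> M \<rightarrow>\<^sub>M count_space UNIV" for a
    by (rule measurable_compose_countable[OF _ assms(2)]) simp
  then show ?thesis
    by (rule measurable_compose_countable[OF _ assms(1)])
qed

lemma measurable_run:
  assumes "\<And>t. (\<lambda>r. msgA P A r t) \<in> coins \<rightarrow>\<^sub>M count_space UNIV"
    and "\<And>t. (\<lambda>r. msgB P B r t) \<in> coins \<rightarrow>\<^sub>M count_space UNIV"
    and "\<And>t. Measurable.pred coins (\<lambda>r. halts P r t)"
  shows "(\<lambda>r. run P A B r k) \<in> coins \<rightarrow>\<^sub>M count_space UNIV"
proof (induction k)
  case (Suc k)
  have "(\<lambda>r. if halts P r t then t else t @ [if even (length t) then msgA P A r t else msgB P B r t])
      \<in> coins \<rightarrow>\<^sub>M count_space UNIV" for t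
    using assms by measurable
  from measurable_compose_countable[OF this Suc] show ?case by (simp add: Let_def)
qed simp

lemma pred_good_run:
  assumes "\<And>t. (\<lambda>r. msgA P A r t) \<in> coins \<rightarrow>\<^sub>M count_space UNIV"
    and "\<And>t. (\<lambda>r. msgB P B r t) \<in> coins \<rightarrow>\<^sub>M count_space UNIV"
    and "\<And>t. Measurable.pred coins (\<lambda>r. halts P r t)"
    and "\<And>t. (\<lambda>r. outp P r t) \<in> coins \<rightarrow>\<^sub>M count_space UNIV"
  shows "Measurable.pred coins (good_run P A B R M ok)"
proof -
  have "Measurable.pred coins (\<lambda>r. real k \<le> R \<and> halts P r t \<and>
      real (sum_list (map length t)) \<le> M \<and> ok (outp P r t))" for k t
    using assms(3,4) by measurable
  from measurable_compose_countable[OF this measurable_run[OF assms(1-3)]]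
  show ?thesis unfolding good_run_def by measurable
qed

section \<open>Squaring search for the longest common prefix\<close>

(* Distinct pairs (X, j) read distinct coins, so hash bits of different strings are independent
   fair coins. *)
definition hash_bit :: "'a::countable list \<Rightarrow> nat \<Rightarrow> (nat \<Rightarrow> bool) \<Rightarrow> bool" where
  "hash_bit X j r = r (to_nat (X, j))"

definition probe :: "'a::countable list \<Rightarrow> (nat \<Rightarrow> bool) \<Rightarrow> nat \<Rightarrow> bool list" where
  "probe A r i =
     [length A < level i, hash_bit (take (level i) A) 0 r, hash_bit (take (level i) A) 1 r]"

definition stops :: "'a::countable list \<Rightarrow> (nat \<Rightarrow> bool) \<Rightarrow> nat \<Rightarrow> bool list \<Rightarrow> bool" where
  "stops B r i m \<longleftrightarrow>
     m ! 0 \<or> m ! 1 \<noteq> hash_bit (take (level i) B) 0 r \<or> m ! 2 \<noteq> hash_bit (take (level i) B) 1 r"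

(* Round i consists of message 2 i by Alice and message 2 i + 1 by Bob; Bob answers True to stop. *)
definition squaring_search :: "'a::countable protocol" where
  "squaring_search =
     \<lparr>msgA = (\<lambda>A r t. probe A r (length t div 2)),
      msgB = (\<lambda>B r t. [stops B r (length t div 2) (last t)]),
      halts = (\<lambda>r t. t \<noteq> [] \<and> even (length t) \<and> last t = [True]),
      outp = (\<lambda>r t. level (length t div 2 - 1) - 1)\<rparr>"

lemma squaring_search_simps [simp]:
  "msgA squaring_search A r t = probe A r (length t div 2)"
  "msgB squaring_search B r t = [stops B r (length t div 2) (last t)]"
  "halts squaring_search r t \<longleftrightarrow> t \<noteq> [] \<and> even (length t) \<and> last t = [True]"
  "outp squaring_search r t = level (length t div 2 - 1) - 1"
  by (simp_all add: squaring_search_def)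

lemma prefix_free_squaring_search: "prefix_free_protocol squaring_search"
  unfolding prefix_free_protocol_def by (auto dest!: prefix_length_less simp: probe_def)

lemma pred_good_run_squaring_search:
  "Measurable.pred coins (good_run squaring_search A B R M ok)"
  by (rule pred_good_run) (simp_all add: probe_def stops_def hash_bit_def)

lemma not_stops_below_LCP:
  assumes "level i \<le> LCP A B"
  shows "\<not> stops B r i (probe A r i)"
  using assms by (simp add: le_LCP_iff stops_def probe_def)

lemma measure_stops_beyond_LCP:
  assumes "LCP A B < level i"
  shows "measure coins {r. stops B r i (probe A r i)} \<ge> 3/4"
proof -
  interpret prob_space coins
    by (rule prob_space_coins)
  show ?thesis
  proof (cases "length A < level i")
    case True
    then have "{r. stops B r i (probe A r i)} = space coins"
      by (auto simp: stops_def probe_def)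
    then show ?thesis using prob_space by simp
  next
    case False
    then have differ: "take (level i) A \<noteq> take (level i) B"
      using assms LCP_less_iff by blast
    define hA where "hA j = to_nat (take (level i) A, j)" for j :: nat
    define hB where "hB j = to_nat (take (level i) B, j)" for j :: nat
    have "distinct [hA 0, hB 0, hA 1, hB 1]"
      using differ by (simp add: hA_def hB_def)
    moreover have "{r. stops B r i (probe A r i)} =
        space coins - {r. r (hA 0) = r (hB 0) \<and> r (hA 1) = r (hB 1)}"
      using False by (auto simp: stops_def probe_def hash_bit_def hA_def hB_def)
    moreover have "{r \<in> space coins. r (hA 0) = r (hB 0) \<and> r (hA 1) = r (hB 1)} \<in> events"
      by measurable
    ultimately show ?thesis
      using prob_compl measure_coins_double_collision by simp
  qed
qed

definition continuing_transcript :: "'a::countable list \<Rightarrow> (nat \<Rightarrow> bool) \<Rightarrow> nat \<Rightarrow> bool list list" where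
  "continuing_transcript A r i = concat (map (\<lambda>j. [probe A r j, [False]]) [0..<i])"

lemma length_continuing_transcript: "length (continuing_transcript A r i) = 2 * i"
  by (induction i) (simp_all add: continuing_transcript_def)

lemma communication_continuing_transcript:
  "sum_list (map length (continuing_transcript A r i)) = 4 * i"
  by (induction i) (simp_all add: continuing_transcript_def probe_def)

lemma run_squaring_search_round:
  assumes "run squaring_search A B r (2 * i) = continuing_transcript A r i"
  shows "run squaring_search A B r (2 * i + 2) =
           continuing_transcript A r i @ [probe A r i, [stops B r i (probe A r i)]]"
proof -
  have "\<not> halts squaring_search r (continuing_transcript A r i)"
    by (cases i) (simp_all add: continuing_transcript_def)
  then show ?thesis
    using assms by (simp add: Let_def length_continuing_transcript)
qed

lemma run_squaring_search_continuing:
  assumes "\<And>j. j < i \<Longrightarrow> level j \<le> LCP A B"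
  shows "run squaring_search A B r (2 * i) = continuing_transcript A r i"
  using assms
proof (induction i)
  case (Suc i)
  then show ?case
    using run_squaring_search_round[of A B r i] not_stops_below_LCP[of i A B r]
    by (simp add: continuing_transcript_def)
qed (simp add: continuing_transcript_def)

lemma good_run_squaring_search:
  fixes A B :: "'a::countable list"
  defines "bnd \<equiv> 16 * (1 + log 2 (log 2 (real (LCP A B) + 4)))"
    and "ok \<equiv> \<lambda>l'. LCP A B \<le> l' \<and> l' \<le> LCP A B ^ 2"
  assumes stop: "stops B r (level_index (LCP A B)) (probe A r (level_index (LCP A B)))"
  shows "good_run squaring_search A B bnd bnd ok r"
proof -
  define c where "c = level_index (LCP A B)"
  have continuing: "run squaring_search A B r (2 * c) = continuing_transcript A r c"
    using run_squaring_search_continuing level_le_below_level_index unfolding c_def by blast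
  have "run squaring_search A B r (2 * c + 2) =
      continuing_transcript A r c @ [probe A r c, [True]]"
    using run_squaring_search_round[OF continuing] stop unfolding c_def by (simp del: run.simps)
  moreover have "real (4 * c + 4) \<le> bnd"
    using level_index_less_loglog[of "LCP A B"] one_le_loglog[of "LCP A B"]
    unfolding bnd_def c_def
    by (simp only: of_nat_add of_nat_mult of_nat_numeral distrib_left mult_1_right)
  ultimately show ?thesis
    unfolding good_run_def using level_index_bounds[of "LCP A B"]
    by (intro exI[of _ "2 * c + 2"])
       (simp add: length_continuing_transcript communication_continuing_transcript probe_def
         c_def ok_def)
qed

lemma squaring_search_success:
  fixes A B :: "'a::countable list"
  defines "bnd \<equiv> 16 * (1 + log 2 (log 2 (real (LCP A B) + 4)))"
    and "ok \<equiv> \<lambda>l'. LCP A B \<le> l' \<and> l' \<le> LCP A B ^ 2"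
  shows "measure coins {r. good_run squaring_search A B bnd bnd ok r} \<ge> 3/4"
proof -
  interpret prob_space coins
    by (rule prob_space_coins)
  define c where "c = level_index (LCP A B)"
  have "3/4 \<le> measure coins {r. stops B r c (probe A r c)}"
    using measure_stops_beyond_LCP less_level_index unfolding c_def by blast
  also have "\<dots> \<le> measure coins {r. good_run squaring_search A B bnd bnd ok r}"
    using good_run_squaring_search pred_good_run_squaring_search
    by (intro finite_measure_mono) (auto simp: c_def bnd_def ok_def pred_def)
  finally show ?thesis .
qed

section \<open>Announcing the scale of the length\<close>

definition unary_binary_code :: "nat \<Rightarrow> bool list" where
  "unary_binary_code k = replicate (floorlog 2 k) True @ False # map (bit k) [0..<floorlog 2 k]"

definition unary_binary_decode :: "bool list \<Rightarrow> nat" where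
  "unary_binary_decode c = horner_sum of_bool 2 (drop (Suc (length (takeWhile id c))) c)"

lemma unary_binary_decode_code: "unary_binary_decode (unary_binary_code k) = k"
proof -
  have "k < 2 ^ floorlog 2 k"
    using floorlog_bounds[of k 2] by (cases "k = 0") simp_all
  moreover have "takeWhile id (replicate m True @ False # xs) = replicate m True" for m xs
    by (induction m) simp_all
  ultimately show ?thesis
    by (simp add: unary_binary_decode_def unary_binary_code_def
        horner_sum_bit_eq_take_bit take_bit_nat_eq_self)
qed

lemma length_unary_binary_code: "length (unary_binary_code k) = 2 * floorlog 2 k + 1"
  by (simp add: unary_binary_code_def)

lemma prefix_unary_header:
  "prefix (replicate a True @ False # xs) (replicate b True @ False # ys) \<Longrightarrow> a = b"
proof (induction a arbitrary: b)
  case 0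
  then show ?case by (cases b) auto
next
  case (Suc a)
  then show ?case by (cases b) auto
qed

lemma unary_binary_code_prefix_free: "\<not> strict_prefix (unary_binary_code m) (unary_binary_code n)"
proof
  assume strict: "strict_prefix (unary_binary_code m) (unary_binary_code n)"
  then have "floorlog 2 m = floorlog 2 n"
    unfolding unary_binary_code_def strict_prefix_def by (blast intro: prefix_unary_header)
  then show False
    using prefix_length_less[OF strict] by (simp add: length_unary_binary_code)
qed

lemma floorlog_le_log: "0 < k \<Longrightarrow> real (floorlog 2 k) \<le> log 2 k + 1"
  by (simp add: floorlog_def)

lemma length_unary_binary_code_level_index:
  "real (length (unary_binary_code (level_index n)))
     \<le> 7 * (1 + log 2 (log 2 (log 2 (real n + 4))))"
proof -
  define y where "y = log 2 (log 2 (real n + 4))"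
  define k where "k = level_index n"
  have y: "1 \<le> y"
    using one_le_loglog[of n] unfolding y_def .
  have "real (floorlog 2 k) \<le> 3 + log 2 y"
  proof (cases "k = 0")
    case False
    have "real k < y + 2"
      using level_index_less_loglog[of n] unfolding k_def y_def .
    then have "real k \<le> 3 * y"
      using y by linarith
    then have "log 2 k \<le> log 2 (3 * y)"
      using False y by simp
    also have "\<dots> = log 2 3 + log 2 y"
      using y by (simp add: log_mult)
    finally have "log 2 k \<le> log 2 3 + log 2 y" .
    moreover have "log 2 3 < (2::real)"
      by (subst log_less_iff) auto
    ultimately show ?thesis
      using floorlog_le_log[of k] False by linarith
  qed (use y in \<open>simp add: floorlog_def\<close>)
  moreover have "0 \<le> log 2 y"
    using y by simp
  moreover have "real (length (unary_binary_code k)) = 2 * real (floorlog 2 k) + 1"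
    by (simp add: length_unary_binary_code)
  ultimately have "real (length (unary_binary_code k)) \<le> 7 * (1 + log 2 y)"
    unfolding distrib_left by linarith
  then show ?thesis
    unfolding k_def y_def .
qed

definition announce_level :: "'a protocol" where
  "announce_level =
     \<lparr>msgA = (\<lambda>A r t. unary_binary_code (level_index (length A))),
      msgB = (\<lambda>B r t. []),
      halts = (\<lambda>r t. t \<noteq> []),
      outp = (\<lambda>r t. level (unary_binary_decode (hd t)) - 1)\<rparr>"

lemma prefix_free_announce_level: "prefix_free_protocol announce_level"
  by (simp add: prefix_free_protocol_def announce_level_def unary_binary_code_prefix_free)

lemma good_run_announce_level:
  "good_run announce_level A B 7 (7 * (1 + log 2 (log 2 (log 2 (real (length A) + 4)))))
     (\<lambda>l'. LCP A B \<le> l' \<and> l' \<le> length A ^ 2) r"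
proof -
  have "run announce_level A B r 1 = [unary_binary_code (level_index (length A))]"
    by (simp add: announce_level_def)
  then show ?thesis
    unfolding good_run_def
    using length_unary_binary_code_level_index[of "length A"] level_index_bounds[of "length A"]
      LCP_le_length[of A B]
    by (intro exI[of _ 1]) (auto simp: announce_level_def unary_binary_decode_code)
qed

lemma announce_level_success:
  fixes A B :: "'a list"
  defines "bits \<equiv> 7 * (1 + log 2 (log 2 (log 2 (real (length A) + 4))))"
    and "ok \<equiv> \<lambda>l'. LCP A B \<le> l' \<and> l' \<le> length A ^ 2"
  shows "measure coins {r. good_run announce_level A B 7 bits ok r} = 1"
proof -
  have "{r. good_run announce_level A B 7 bits ok r} = space coins"
    using good_run_announce_level unfolding bits_def ok_def by auto
  then show ?thesis
    using prob_space.prob_space[OF prob_space_coins] by simp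
qed

theorem lemma9:
  shows
   "(\<exists>(c::real) (C::real). c > 1/2 \<and>
      (\<exists>P :: 'a::countable protocol. prefix_free_protocol P \<and>
        (\<forall>A B. let l = LCP A B;
                   bnd = C * (1 + log 2 (log 2 (real l + 4)))
               in measure coins {r. good_run P A B bnd bnd
                                     (\<lambda>l'. l \<le> l' \<and> l' \<le> l ^ 2) r} \<ge> c)))
    \<and>
    (\<exists>(c::real) (C::real). c > 1/2 \<and>
      (\<exists>P :: 'a::countable protocol. prefix_free_protocol P \<and>
        (\<forall>A B. let l = LCP A B
               in measure coins {r. good_run P A B C
                                     (C * (1 + log 2 (log 2 (log 2 (real (length A) + 4)))))
                                     (\<lambda>l'. l \<le> l' \<and> l' \<le> length A ^ 2) r} \<ge> c)))"
  unfolding Let_def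
  apply (intro conjI)
  subgoal
    by (rule exI[of _ "3/4"], rule exI[of _ 16],
        intro conjI exI[of _ squaring_search] allI prefix_free_squaring_search
          squaring_search_success)
      simp
  subgoal
    by (rule exI[of _ "3/4"], rule exI[of _ 7],
        intro conjI exI[of _ announce_level] allI prefix_free_announce_level)
      (simp, subst announce_level_success, simp)
  done

end
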